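(* Let $k\in\mathbb{Z}$ and $z\in\mathbb{C}$ with $|z|>e$. Then $$|W_k'(z)| \le \frac{1}{|z|}\frac{W_0(|z|)}{W_0(|z|)-1}.$$
   Context: $W_k$ denotes the $k$-th branch of the Lambert $W$ function (inverse of $w\mapsto we^w$) in the standard convention of Corless, Gonnet, Hare, Jeffrey and Knuth (1996); $W_0$ is the principal branch, real and increasing on $[-1/e,\infty)$. On a branch cut, values are defined by continuity from the upper half plane and $W_k'$ denotes the derivative of the fixed branch $W_k$ (directional derivative along the cut there). *)

theory Defs
  imports "HOL-Analysis.Analysis"
begin

text \<open>Branches of the Lambert W function (Corless--Gonnet--Hare--Jeffrey--Knuth convention,
  values on branch cuts by continuity from the upper half plane).
  For z \<noteq> 0 outside the exceptional segment, W_k(z) is characterised by the unwinding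
  identity  W_k(z) + Ln W_k(z) = Ln z + 2 pi i k  (principal Ln, Arg in (-pi, pi]),
  i.e. W_k(z) = omega(Ln z + 2 pi i k) with omega the Wright omega function.
  On the real segment [-1/e, 0) the branches k = 0 and k = -1 are the two real solutions
  (W_0 \<ge> -1, W_{-1} \<le> -1).  W_0(0) = 0; W_k(0) for k \<noteq> 0 is undefined (set to 0).\<close>

definition lambert_W :: "int \<Rightarrow> complex \<Rightarrow> complex" where
  "lambert_W k z =
    (if z = 0 then 0
     else if z \<in> \<real> \<and> - exp (-1) \<le> Re z \<and> Re z < 0 \<and> k \<in> {0, -1} then
       (if k = 0 then (THE w. w \<in> \<real> \<and> -1 \<le> Re w \<and> w * exp w = z)
        else (THE w. w \<in> \<real> \<and> Re w \<le> -1 \<and> w * exp w = z))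
     else (THE w. w \<noteq> 0 \<and> w + Ln w = Ln z + 2 * of_real pi * \<i> * of_int k))"

text \<open>Derivative of the fixed branch W_k: the complex derivative off the real axis, and the
  directional derivative along the real axis at real points (on the branch cut this is the
  derivative along the cut; off the cut it coincides with the complex derivative).\<close>

definition lambert_W_deriv :: "int \<Rightarrow> complex \<Rightarrow> complex" where
  "lambert_W_deriv k z =
    (if z \<in> \<real> then (THE D. (lambert_W k has_field_derivative D) (at z within \<real>))
     else deriv (lambert_W k) z)"

end

theory Submission
  imports Defs "HOL-Complex_Analysis.Complex_Analysis"
begin

text \<open>For \<open>|z| > e\<close> every branch is \<open>W\<^sub>k(z) = \<omega>(Ln z + 2\<pi>ik)\<close>, where the Wright omega function
  \<open>\<omega>\<close> inverts \<open>w \<mapsto> w + Ln w\<close> on the half plane \<open>Re > 1\<close>; there it is holomorphic with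
  \<open>\<omega>' = \<omega>/(1 + \<omega>)\<close>, so \<open>W\<^sub>k'(z) = W/((1 + W) z)\<close> with \<open>W = W\<^sub>k(z)\<close>, also along the cut.
  Taking real parts in \<open>W + Ln W = Ln z + 2\<pi>ik\<close> gives \<open>Re W + ln |W| = ln |z|\<close>, whereas
  \<open>X = W\<^sub>0(|z|)\<close> satisfies \<open>X + ln X = ln |z|\<close>; since \<open>t + ln t\<close> is increasing, \<open>|W| \<ge> X > 1\<close>,
  and \<open>|W/(1 + W)| \<le> |W|/(|W| - 1) \<le> X/(X - 1)\<close>.\<close>

text \<open>If \<open>w = r e\<^sup>i\<^sup>t\<close> and \<open>Im (w + Ln w) = b\<close>, then \<open>r = (b - t)/sin t\<close> and
  \<open>Re (w + Ln w) = omega_profile b t\<close>.\<close>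

definition omega_profile :: "real \<Rightarrow> real \<Rightarrow> real" where
  "omega_profile b t = cos t * ((b - t) / sin t) + ln ((b - t) / sin t)"

lemma omega_profile_has_real_derivative:
  assumes "0 < t" "t < pi" "t < b"
  shows "(omega_profile b has_real_derivative
           - ((b - t + cos t * sin t)\<^sup>2 + sin t ^ 4) / ((b - t) * (sin t)\<^sup>2)) (at t)"
proof -
  have s: "sin t > 0" using assms by (simp add: sin_gt_zero)
  have u: "b - t > 0" using assms by simp
  have "((\<lambda>t. (b - t) * cos t / sin t + ln ((b - t) / sin t)) has_real_derivative
     ((- cos t - (b - t) * sin t) * sin t - (b - t) * cos t * cos t) / (sin t * sin t)
     + ((- sin t - (b - t) * cos t) / (sin t * sin t)) / ((b - t) / sin t)) (at t)"
    using s u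
    apply (intro derivative_eq_intros)
    apply (rule derivative_eq_intros refl | simp)+
    apply (simp add: algebra_simps)
    done
  moreover have "((- cos t - (b - t) * sin t) * sin t - (b - t) * cos t * cos t) / (sin t * sin t)
     + ((- sin t - (b - t) * cos t) / (sin t * sin t)) / ((b - t) / sin t)
     = - ((b - t + cos t * sin t)\<^sup>2 + sin t ^ 4) / ((b - t) * (sin t)\<^sup>2)"
  proof -
    have c2: "cos t * cos t = 1 - sin t * sin t"
      using sin_cos_squared_add[of t] by (simp add: power2_eq_square)
    show ?thesis using s u
      apply (simp add: field_simps power2_eq_square power4_eq_xxxx)
      using c2 by algebra
  qed
  moreover have "omega_profile b = (\<lambda>t. (b - t) * cos t / sin t + ln ((b - t) / sin t))"
    by (simp add: omega_profile_def fun_eq_iff)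
  ultimately show ?thesis by simp
qed

lemma omega_profile_strict_decreasing:
  assumes "0 < s" "s < t" "t < pi" "t < b"
  shows "omega_profile b t < omega_profile b s"
proof (rule DERIV_neg_imp_decreasing[OF \<open>s < t\<close>])
  fix x assume x: "s \<le> x" "x \<le> t"
  then have "sin x > 0" "b - x > 0" using assms by (auto intro!: sin_gt_zero)
  then have "0 < (b - x + cos x * sin x)\<^sup>2 + sin x ^ 4"
    by (intro add_nonneg_pos) auto
  with \<open>sin x > 0\<close> \<open>b - x > 0\<close>
  have "- ((b - x + cos x * sin x)\<^sup>2 + sin x ^ 4) / ((b - x) * (sin x)\<^sup>2) < 0"
    by (intro divide_neg_pos) auto
  with x assms show "\<exists>y. (omega_profile b has_real_derivative y) (at x) \<and> y < 0"
    using omega_profile_has_real_derivative[of x b] by fastforce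
qed

lemma omega_profile_tendsto_at_right_0:
  assumes "0 < b"
  shows "filterlim (omega_profile b) at_top (at_right 0)"
proof -
  have sin_pos: "\<forall>\<^sub>F t in at_right 0. 0 < sin (t::real)"
    unfolding eventually_at_right_field by (auto intro!: exI[of _ pi] sin_gt_zero)
  have "(sin \<longlongrightarrow> 0) (at_right (0::real))"
    using tendsto_sin[of "\<lambda>t. t" 0 "at_right 0"] by simp
  then have quot: "filterlim (\<lambda>t. (b - t) / sin t) at_top (at_right 0)"
    using assms sin_pos by (intro LIM_at_top_divide tendsto_eq_intros) auto
  have "((\<lambda>t. cos t) \<longlongrightarrow> 1) (at_right (0::real))"
    by (auto intro!: tendsto_eq_intros)
  then show ?thesis
    unfolding omega_profile_def[abs_def]
    by (intro filterlim_at_top_add_at_top filterlim_tendsto_pos_mult_at_top[OF _ _ quot]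
          filterlim_compose[OF ln_at_top quot]) auto
qed

lemma omega_profile_tendsto_at_left:
  assumes "0 < b" "b < pi"
  shows "filterlim (omega_profile b) at_bot (at_left b)"
proof -
  have quot_pos: "\<forall>\<^sub>F t in at_left b. 0 < (b - t) / sin t"
    unfolding eventually_at_left_field
    by (rule exI[of _ 0]) (use assms in \<open>auto intro!: divide_pos_pos sin_gt_zero\<close>)
  have "((\<lambda>t. (b - t) / sin t) \<longlongrightarrow> 0) (at_left b)"
    using assms sin_gt_zero[of b] by (auto intro!: tendsto_eq_intros)
  then have quot: "filterlim (\<lambda>t. (b - t) / sin t) (at_right 0) (at_left b)"
    and cos_term: "((\<lambda>t. cos t * ((b - t) / sin t)) \<longlongrightarrow> 0) (at_left b)"
    using quot_pos assms sin_gt_zero[of b] by (auto simp: filterlim_at elim: eventually_mono intro!: tendsto_eq_intros)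
  show ?thesis
    unfolding omega_profile_def[abs_def] filterlim_tendsto_add_at_bot_iff[OF cos_term]
    by (rule filterlim_compose[OF ln_at_0 quot])
qed

lemma omega_profile_surj:
  assumes "0 < b" "0 < a"
  obtains t where "0 < t" "t < b" "t < pi" "omega_profile b t = a"
proof -
  have "\<forall>\<^sub>F t in at_right 0. a < omega_profile b t"
    using omega_profile_tendsto_at_right_0[OF assms(1)] unfolding filterlim_at_top_dense by blast
  then obtain d where d: "d > 0" "\<And>y. 0 < y \<Longrightarrow> y < d \<Longrightarrow> a < omega_profile b y"
    unfolding eventually_at_right_field by blast
  define t1 where "t1 = min d (min b pi) / 2"
  have "0 < min d (min b pi)" "min d (min b pi) \<le> d" "min d (min b pi) \<le> b"
    "min d (min b pi) \<le> pi"
    using d assms pi_gt_zero by auto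
  then have "0 < t1" "t1 < d" "t1 < b" "t1 < pi" "t1 \<le> pi / 2"
    unfolding t1_def using pi_gt_zero by linarith+
  then have t1: "0 < t1" "t1 < b" "t1 < pi" "t1 \<le> pi / 2" "a < omega_profile b t1"
    using d(2)[of t1] by auto
  obtain t2 where t2: "t1 < t2" "t2 < b" "t2 < pi" "omega_profile b t2 < a"
  proof (cases "2 * pi / 3 < b")
    case True
    define R where "R = (b - 2 * pi / 3) / sin (2 * pi / 3)"
    have "R > 0" using True by (simp add: R_def sin_120)
    then have "ln R \<le> R / 2"
      using ln_le_minus_one[of "R / 2"] ln_2_less_1 by (simp add: ln_div)
    then have "omega_profile b (2 * pi / 3) < a"
      using \<open>0 < a\<close> by (simp add: omega_profile_def cos_120 flip: R_def)
    then show ?thesis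
      using True t1 pi_gt_zero by (intro that[of "2 * pi / 3"]) auto
  next
    case False
    then have "b < pi" using pi_gt_zero by linarith
    have "\<forall>\<^sub>F t in at_left b. t1 < t \<and> omega_profile b t < a"
      using omega_profile_tendsto_at_left[OF assms(1) \<open>b < pi\<close>] t1
      unfolding filterlim_at_bot_dense eventually_conj_iff
      by (auto simp: eventually_at_left_field)
    then obtain e where
      e: "e < b" "\<And>y. e < y \<Longrightarrow> y < b \<Longrightarrow> t1 < y \<and> omega_profile b y < a"
      unfolding eventually_at_left_field by blast
    show ?thesis
      using e(2)[of "(max e t1 + b) / 2"] e(1) t1 \<open>b < pi\<close>
      by (intro that[of "(max e t1 + b) / 2"]) auto
  qed
  have "\<forall>x. t1 \<le> x \<and> x \<le> t2 \<longrightarrow> isCont (omega_profile b) x"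
    using t1 t2 by (auto intro!: DERIV_isCont omega_profile_has_real_derivative)
  then obtain t where "t1 \<le> t" "t \<le> t2" "omega_profile b t = a"
    using IVT2[of "omega_profile b" t2 a t1] t1 t2 by auto
  with t1 t2 show ?thesis by (intro that) auto
qed

lemma x_plus_ln_le_cancel:
  fixes x y :: real
  assumes "0 < x" "0 < y" "x + ln x \<le> y + ln y"
  shows "x \<le> y"
proof (rule ccontr)
  assume "\<not> x \<le> y"
  then have "ln y < ln x" using assms by simp
  with assms \<open>\<not> x \<le> y\<close> show False by linarith
qed

definition plus_Ln :: "complex \<Rightarrow> complex" where
  "plus_Ln w = w + Ln w"

lemma Re_plus_Ln: "w \<noteq> 0 \<Longrightarrow> Re (plus_Ln w) = norm w * cos (Arg w) + ln (norm w)"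
  by (simp add: plus_Ln_def cos_Arg)

lemma Im_plus_Ln:
  assumes "w \<noteq> 0"
  shows "Im (plus_Ln w) = norm w * sin (Arg w) + Arg w"
proof -
  have "Im w = norm w * sin (Arg w)" using assms by (simp add: sin_Arg)
  moreover have "Im (Ln w) = Arg w" using assms by (simp add: Arg_eq_Im_Ln)
  ultimately show ?thesis by (simp add: plus_Ln_def)
qed

lemma plus_Ln_cnj: "w \<notin> \<real>\<^sub>\<le>\<^sub>0 \<Longrightarrow> plus_Ln (cnj w) = cnj (plus_Ln w)"
  by (simp add: plus_Ln_def cnj_Ln)

lemma plus_Ln_not_nonpos_Reals:
  assumes "w \<noteq> 0" "-1 < Re (plus_Ln w)"
  shows "w \<notin> \<real>\<^sub>\<le>\<^sub>0"
proof
  assume "w \<in> \<real>\<^sub>\<le>\<^sub>0"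
  then have "Arg w = pi"
    using assms(1) by (auto simp: complex_nonpos_Reals_iff complex_eq_iff Arg_eq_pi)
  then have "Re (plus_Ln w) = - norm w + ln (norm w)" using assms(1) by (simp add: Re_plus_Ln)
  also have "\<dots> \<le> -1" using ln_le_minus_one[of "norm w"] assms(1) by simp
  finally show False using assms(2) by simp
qed

lemma Arg_less_pi_if_not_nonpos_Reals: "w \<notin> \<real>\<^sub>\<le>\<^sub>0 \<Longrightarrow> Arg w < pi"
  using Arg_le_pi[of w] Arg_eq_pi[of w] by (fastforce simp: complex_nonpos_Reals_iff)

lemma plus_Ln_upper_half:
  assumes "w \<noteq> 0" "-1 < Re (plus_Ln w)" "0 < Im (plus_Ln w)"
  shows "0 < Arg w" "Arg w < pi" "Arg w < Im (plus_Ln w)"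
    and "norm w = (Im (plus_Ln w) - Arg w) / sin (Arg w)"
    and "omega_profile (Im (plus_Ln w)) (Arg w) = Re (plus_Ln w)"
proof -
  have Arg: "- pi < Arg w" "Arg w < pi"
    using mpi_less_Arg Arg_less_pi_if_not_nonpos_Reals plus_Ln_not_nonpos_Reals[OF assms(1,2)]
    by auto
  have Im: "norm w * sin (Arg w) = Im (plus_Ln w) - Arg w" using Im_plus_Ln[OF assms(1)] by simp
  show "0 < Arg w"
  proof (rule ccontr)
    assume "\<not> 0 < Arg w"
    then have "sin (Arg w) \<le> 0" using Arg sin_ge_zero[of "- Arg w"] by simp
    then have "norm w * sin (Arg w) \<le> 0" by (simp add: mult_nonneg_nonpos)
    with Im assms(3) \<open>\<not> 0 < Arg w\<close> show False by linarith
  qed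
  then have sin_pos: "sin (Arg w) > 0" using Arg by (simp add: sin_gt_zero)
  with Im assms(1) show "Arg w < Im (plus_Ln w)"
    by (smt (verit) mult_pos_pos zero_less_norm_iff)
  from sin_pos Im show norm_w: "norm w = (Im (plus_Ln w) - Arg w) / sin (Arg w)"
    by (simp add: eq_divide_eq)
  show "Arg w < pi" by (fact Arg(2))
  show "omega_profile (Im (plus_Ln w)) (Arg w) = Re (plus_Ln w)"
    unfolding omega_profile_def Re_plus_Ln[OF assms(1)] norm_w[symmetric] by simp
qed

lemma Arg_eq_0_if_Im_plus_Ln_eq_0:
  assumes "w \<noteq> 0" "-1 < Re (plus_Ln w)" "Im (plus_Ln w) = 0"
  shows "Arg w = 0"
proof (rule ccontr)
  assume "Arg w \<noteq> 0"
  moreover have "- pi < Arg w" "Arg w < pi"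
    using mpi_less_Arg Arg_less_pi_if_not_nonpos_Reals plus_Ln_not_nonpos_Reals[OF assms(1,2)]
    by auto
  ultimately have "0 < Arg w \<and> 0 < sin (Arg w) \<or> Arg w < 0 \<and> sin (Arg w) < 0"
    using sin_gt_zero[of "Arg w"] sin_gt_zero[of "- Arg w"] by (cases "0 < Arg w") auto
  moreover have "norm w * sin (Arg w) + Arg w = 0" using Im_plus_Ln[OF assms(1)] assms(3) by simp
  ultimately show False
    using assms(1) by (smt (verit) mult_pos_pos mult_pos_neg zero_less_norm_iff)
qed

lemma plus_Ln_inj_upper_half:
  assumes "w1 \<noteq> 0" "w2 \<noteq> 0" "plus_Ln w1 = plus_Ln w2"
    and "-1 < Re (plus_Ln w1)" "0 < Im (plus_Ln w1)"
  shows "w1 = w2"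
proof -
  note w1 = plus_Ln_upper_half[OF assms(1,4,5)]
  note w2 = plus_Ln_upper_half[OF assms(2), folded assms(3), OF assms(4,5)]
  have "Arg w1 = Arg w2"
  proof (rule ccontr)
    assume "Arg w1 \<noteq> Arg w2"
    then show False
      using omega_profile_strict_decreasing[of "Arg w1" "Arg w2" "Im (plus_Ln w1)"]
        omega_profile_strict_decreasing[of "Arg w2" "Arg w1" "Im (plus_Ln w1)"] w1 w2
      by (cases "Arg w1 < Arg w2") auto
  qed
  moreover from this have "norm w1 = norm w2" using w1 w2 by simp
  ultimately show ?thesis using rcis_cmod_Arg[of w1] rcis_cmod_Arg[of w2] by metis
qed

lemma plus_Ln_inj:
  assumes "w1 \<noteq> 0" "w2 \<noteq> 0" "plus_Ln w1 = plus_Ln w2" "-1 < Re (plus_Ln w1)"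
  shows "w1 = w2"
proof -
  consider "0 < Im (plus_Ln w1)" | "Im (plus_Ln w1) < 0" | "Im (plus_Ln w1) = 0" by linarith
  then show ?thesis
  proof cases
    case 1
    then show ?thesis using plus_Ln_inj_upper_half[OF assms] by simp
  next
    case 2
    have "w1 \<notin> \<real>\<^sub>\<le>\<^sub>0" "w2 \<notin> \<real>\<^sub>\<le>\<^sub>0"
      using plus_Ln_not_nonpos_Reals assms by metis+
    then have cnj1: "plus_Ln (cnj w1) = cnj (plus_Ln w1)"
      and cnj2: "plus_Ln (cnj w2) = cnj (plus_Ln w1)"
      using assms(3) by (simp_all add: plus_Ln_cnj)
    have "cnj w1 = cnj w2"
    proof (rule plus_Ln_inj_upper_half)
      show "cnj w1 \<noteq> 0" "cnj w2 \<noteq> 0" using assms(1,2) by simp_all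
      show "plus_Ln (cnj w1) = plus_Ln (cnj w2)" unfolding cnj1 cnj2 ..
      show "-1 < Re (plus_Ln (cnj w1))" "0 < Im (plus_Ln (cnj w1))"
        unfolding cnj1 using assms(4) 2 by simp_all
    qed
    then show ?thesis by simp
  next
    case 3
    then have "Arg w1 = 0" "Arg w2 = 0"
      using Arg_eq_0_if_Im_plus_Ln_eq_0 assms by metis+
    with assms have "norm w1 + ln (norm w1) = norm w2 + ln (norm w2)"
      using Re_plus_Ln[of w1] Re_plus_Ln[of w2] by simp
    with assms(1,2) have "norm w1 = norm w2"
      using x_plus_ln_le_cancel[of "norm w1" "norm w2"] x_plus_ln_le_cancel[of "norm w2" "norm w1"]
      by simp
    with \<open>Arg w1 = 0\<close> \<open>Arg w2 = 0\<close> show ?thesis using rcis_cmod_Arg[of w1] rcis_cmod_Arg[of w2] by metis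
  qed
qed

lemma plus_Ln_surj_upper_half:
  assumes "0 < a" "0 < b"
  obtains w where "w \<noteq> 0" "plus_Ln w = Complex a b"
proof -
  obtain t where t: "0 < t" "t < b" "t < pi" "omega_profile b t = a"
    using omega_profile_surj[OF assms(2,1)] by blast
  have "sin t > 0" using t by (simp add: sin_gt_zero)
  define r where "r = (b - t) / sin t"
  have r: "r > 0" unfolding r_def using \<open>sin t > 0\<close> t by simp
  define w where "w = rcis r t"
  have w: "norm w = r" "w \<noteq> 0" unfolding w_def using r by auto
  have "sgn w = cis t" unfolding w_def using r by (simp add: rcis_def sgn_mult sgn_of_real)
  then have "Arg w = t" using t by (intro cis_Arg_unique) auto
  have "plus_Ln w = Complex a b"
  proof (rule complex_eqI)
    show "Re (plus_Ln w) = Re (Complex a b)"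
      using t(4) by (simp add: Re_plus_Ln w \<open>Arg w = t\<close> omega_profile_def mult.commute flip: r_def)
    show "Im (plus_Ln w) = Im (Complex a b)"
      using \<open>sin t > 0\<close> by (simp add: Im_plus_Ln w \<open>Arg w = t\<close> r_def)
  qed
  with w show ?thesis by (intro that)
qed

lemma plus_Ln_surj:
  assumes "1 < Re z"
  obtains w where "w \<noteq> 0" "plus_Ln w = z"
proof -
  consider "0 < Im z" | "Im z < 0" | "Im z = 0" by linarith
  then show ?thesis
  proof cases
    case 1
    with assms obtain w where "w \<noteq> 0" "plus_Ln w = Complex (Re z) (Im z)"
      using plus_Ln_surj_upper_half[of "Re z" "Im z"] by auto
    then show ?thesis by (intro that) simp_all
  next
    case 2
    obtain w where "w \<noteq> 0" "plus_Ln w = Complex (Re z) (- Im z)"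
      using plus_Ln_surj_upper_half[of "Re z" "- Im z"] 2 assms by auto
    then have w: "w \<noteq> 0" "plus_Ln w = cnj z" by (simp_all add: complex_eq_iff)
    then have "w \<notin> \<real>\<^sub>\<le>\<^sub>0" using plus_Ln_not_nonpos_Reals assms by simp
    with w have "plus_Ln (cnj w) = z" by (simp add: plus_Ln_cnj)
    with w show ?thesis by (intro that[of "cnj w"]) simp_all
  next
    case 3
    have "\<exists>x. 1 \<le> x \<and> x \<le> Re z \<and> x + ln x = Re z"
      using assms by (intro IVT) (auto intro!: continuous_intros)
    then obtain x where "1 \<le> x" "x + ln x = Re z" by blast
    with 3 have "plus_Ln (of_real x) = z"
      by (simp add: plus_Ln_def Ln_of_real complex_eq_iff)
    with \<open>1 \<le> x\<close> show ?thesis by (intro that[of "of_real x"]) auto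
  qed
qed

definition wright_omega :: "complex \<Rightarrow> complex" where
  "wright_omega z = (THE w. w \<noteq> 0 \<and> plus_Ln w = z)"

lemma wright_omega_eqI:
  assumes "w \<noteq> 0" "plus_Ln w = z" "1 < Re z"
  shows "wright_omega z = w"
  unfolding wright_omega_def
proof (rule the_equality)
  show "w \<noteq> 0 \<and> plus_Ln w = z" using assms by simp
  show "v = w" if "v \<noteq> 0 \<and> plus_Ln v = z" for v
    using that assms plus_Ln_inj[of v w] by simp
qed

lemma wright_omega:
  assumes "1 < Re z"
  shows "wright_omega z \<noteq> 0" "plus_Ln (wright_omega z) = z"
  using plus_Ln_surj[OF assms] wright_omega_eqI[OF _ _ assms] by metis+

lemma wright_omega_not_nonpos_Reals:
  assumes "1 < Re z"
  shows "wright_omega z \<notin> \<real>\<^sub>\<le>\<^sub>0"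
  using plus_Ln_not_nonpos_Reals wright_omega[OF assms] assms by simp

lemma wright_omega_holomorphic_on: "wright_omega holomorphic_on {z. 1 < Re z}"
proof -
  define S where "S = - \<real>\<^sub>\<le>\<^sub>0 \<inter> plus_Ln -` {z. 1 < Re z}"
  have "continuous_on (- \<real>\<^sub>\<le>\<^sub>0) plus_Ln"
    unfolding plus_Ln_def by (intro continuous_intros) auto
  then have "open S"
    unfolding S_def by (rule continuous_open_preimage) (auto intro: open_halfspace_Re_gt)
  moreover have "plus_Ln holomorphic_on S"
    unfolding plus_Ln_def S_def by (intro holomorphic_intros) auto
  moreover have "inj_on plus_Ln S"
  proof (rule inj_onI)
    fix x y assume "x \<in> S" "y \<in> S" "plus_Ln x = plus_Ln y"
    moreover from this have "x \<noteq> 0" "y \<noteq> 0" "1 < Re (plus_Ln x)" by (auto simp: S_def)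
    ultimately show "x = y" using plus_Ln_inj by simp
  qed
  ultimately obtain g where g_holo: "g holomorphic_on (plus_Ln ` S)"
    and g_inv: "\<And>z. z \<in> S \<Longrightarrow> g (plus_Ln z) = z"
    using holomorphic_has_inverse by metis
  have omega_in_S: "wright_omega u \<in> S" if "1 < Re u" for u
    using wright_omega[OF that] wright_omega_not_nonpos_Reals[OF that] that by (auto simp: S_def)
  have "plus_Ln ` S = {z. 1 < Re z}"
    using omega_in_S wright_omega by (force simp: S_def)
  moreover have "g u = wright_omega u" if "1 < Re u" for u
    using g_inv[OF omega_in_S[OF that]] wright_omega[OF that] by simp
  ultimately show ?thesis
    using g_holo by (auto intro: holomorphic_transform)
qed

lemma wright_omega_has_field_derivative:
  assumes "1 < Re z"
  shows "(wright_omega has_field_derivative wright_omega z / (wright_omega z + 1)) (at z)"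
proof -
  define w where "w = wright_omega z"
  have w: "w \<noteq> 0" "plus_Ln w = z" "w \<notin> \<real>\<^sub>\<le>\<^sub>0"
    using wright_omega[OF assms] wright_omega_not_nonpos_Reals[OF assms] by (auto simp: w_def)
  have half_plane: "open {z. 1 < Re z}" by (fact open_halfspace_Re_gt)
  obtain D where D: "(wright_omega has_field_derivative D) (at z)"
    using wright_omega_holomorphic_on assms holomorphic_derivI[OF _ half_plane] by fastforce
  have "(plus_Ln has_field_derivative 1 + inverse w) (at (wright_omega z))"
    unfolding plus_Ln_def[abs_def] w_def[symmetric] using w by (auto intro!: derivative_eq_intros)
  from DERIV_chain2[OF this D]
  have "((\<lambda>x. plus_Ln (wright_omega x)) has_field_derivative (1 + inverse w) * D) (at z)" .
  moreover have "((\<lambda>x. plus_Ln (wright_omega x)) has_field_derivative 1) (at z)"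
    using assms wright_omega(2)
    by (intro has_field_derivative_transform_within_open[OF DERIV_ident half_plane]) auto
  ultimately have "(1 + inverse w) * D = 1" by (rule DERIV_unique)
  moreover have "w + 1 \<noteq> 0" using w(3) by (auto simp: add_eq_0_iff2)
  ultimately have "D = w / (w + 1)" using w(1) by (simp add: field_simps)
  with D show ?thesis by (simp add: w_def)
qed

lemma Re_Ln_plus_branch_gt_1:
  assumes "exp 1 < norm z"
  shows "1 < Re (Ln z + 2 * of_real pi * \<i> * of_int k)"
proof -
  have "z \<noteq> 0" using assms by auto
  moreover have "ln (exp 1) < ln (norm z)" using assms by (intro ln_less_cancel_iff[THEN iffD2]) auto
  ultimately show ?thesis by simp
qed

lemma lambert_W_eq_wright_omega:
  assumes "exp 1 < norm z"
  shows "lambert_W k z = wright_omega (Ln z + 2 * of_real pi * \<i> * of_int k)"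
proof -
  have "\<not> (- exp (-1) \<le> Re z \<and> Re z < 0)" if "z \<in> \<real>"
  proof -
    have "norm z = \<bar>Re z\<bar>" using that by (auto elim!: Reals_cases)
    moreover have "exp (-1) < (exp 1 :: real)" by simp
    ultimately show ?thesis using assms by linarith
  qed
  then show ?thesis
    using assms by (auto simp: lambert_W_def wright_omega_def plus_Ln_def)
qed

lemma lambert_W_has_field_derivative:
  assumes "exp 1 < norm z" "z \<notin> \<real>\<^sub>\<le>\<^sub>0"
  shows "(lambert_W k has_field_derivative lambert_W k z / (lambert_W k z + 1) * inverse z) (at z)"
proof -
  define c where "c = 2 * of_real pi * \<i> * (of_int k :: complex)"
  have Ln_deriv: "((\<lambda>x. Ln x + c) has_field_derivative inverse z) (at z)"
    using assms(2) by (auto intro!: derivative_eq_intros)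
  have "1 < Re (Ln z + c)" using Re_Ln_plus_branch_gt_1[OF assms(1)] by (simp add: c_def)
  then have "((\<lambda>x. wright_omega (Ln x + c)) has_field_derivative
      lambert_W k z / (lambert_W k z + 1) * inverse z) (at z)"
    using DERIV_chain2[OF wright_omega_has_field_derivative Ln_deriv]
    by (simp add: lambert_W_eq_wright_omega[OF assms(1)] c_def)
  moreover have "open ({x :: complex. exp 1 < norm x} \<inter> - \<real>\<^sub>\<le>\<^sub>0)"
    by (intro open_Int open_Compl closed_nonpos_Reals_complex open_Collect_less continuous_intros)
  ultimately show ?thesis
    using assms by (elim has_field_derivative_transform_within_open)
      (auto simp: lambert_W_eq_wright_omega c_def)
qed

text \<open>On the negative axis \<open>Ln\<close> jumps, but along \<open>\<real>\<close> it agrees with the function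
  \<open>Ln (- x) + i\<pi>\<close>, which is holomorphic there.\<close>

lemma lambert_W_has_field_derivative_within_Reals:
  assumes "exp 1 < norm z" "z \<in> \<real>" "Re z < 0"
  shows "(lambert_W k has_field_derivative lambert_W k z / (lambert_W k z + 1) * inverse z)
           (at z within \<real>)"
proof -
  define c where "c = 2 * of_real pi * \<i> * (of_int k :: complex)"
  have Ln_neg: "Ln x = Ln (- x) + \<i> * pi" if "x \<in> \<real>" "Re x < 0" for x
  proof -
    have "- x \<noteq> 0" using that(2) by auto
    with that show ?thesis using Ln_minus[of "- x"] by (auto simp: complex_is_Real_iff)
  qed
  have "- z \<notin> \<real>\<^sub>\<le>\<^sub>0" using assms(3) by (simp add: complex_nonpos_Reals_iff)
  then have Ln_deriv: "((\<lambda>x. Ln (- x) + \<i> * pi + c) has_field_derivative inverse z) (at z)"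
    using assms by (auto intro!: derivative_eq_intros simp: inverse_minus_eq)
  have Ln_z: "Ln (- z) + \<i> * pi + c = Ln z + c" using Ln_neg[OF assms(2,3)] by simp
  have "1 < Re (Ln (- z) + \<i> * pi + c)"
    using Re_Ln_plus_branch_gt_1[OF assms(1)] unfolding Ln_z by (simp add: c_def)
  moreover have W: "lambert_W k z = wright_omega (Ln (- z) + \<i> * pi + c)"
    unfolding Ln_z unfolding c_def by (rule lambert_W_eq_wright_omega[OF assms(1)])
  ultimately have "((\<lambda>x. wright_omega (Ln (- x) + \<i> * pi + c)) has_field_derivative
      lambert_W k z / (lambert_W k z + 1) * inverse z) (at z)"
    using DERIV_chain2[OF wright_omega_has_field_derivative Ln_deriv] unfolding W by simp
  then show ?thesis
  proof (rule has_field_derivative_transform_within[OF has_field_derivative_at_within])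
    show "0 < norm z - exp 1" using assms by simp
    fix x assume x: "x \<in> \<real>" "dist x z < norm z - exp 1"
    have "norm z = - Re z" "norm (x - z) = \<bar>Re x - Re z\<bar>"
      using x(1) assms(2,3) by (auto elim!: Reals_cases simp flip: of_real_diff)
    moreover have "norm z - norm x \<le> norm (x - z)"
      using norm_triangle_ineq2[of z x] by (simp add: norm_minus_commute)
    ultimately have "exp 1 < norm x" "Re x < 0"
      using x(2) exp_gt_zero[of 1] unfolding dist_norm by linarith+
    then show "wright_omega (Ln (- x) + \<i> * pi + c) = lambert_W k x"
      using lambert_W_eq_wright_omega Ln_neg[OF x(1)] by (simp add: c_def)
  qed (use assms in auto)
qed

lemma The_derivative_within_Reals:
  assumes "(z::complex) \<in> \<real>" "(f has_field_derivative D) (at z within \<real>)"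
  shows "(THE D. (f has_field_derivative D) (at z within \<real>)) = D"
proof (rule the_equality)
  have "z islimpt \<real>"
    unfolding islimpt_approachable
  proof (intro allI impI)
    fix e :: real assume "e > 0"
    with assms(1) show "\<exists>x'\<in>\<real>. x' \<noteq> z \<and> dist x' z < e"
      by (intro bexI[of _ "z + of_real (e / 2)"]) (auto simp: dist_norm)
  qed
  then show "E = D" if "(f has_field_derivative E) (at z within \<real>)" for E
    using has_field_derivative_unique[OF that assms(2)] trivial_limit_within by blast
qed (fact assms(2))

lemma lambert_W_deriv_eq:
  assumes "exp 1 < norm z"
  shows "lambert_W_deriv k z = lambert_W k z / (lambert_W k z + 1) * inverse z"
proof (cases "z \<in> \<real>\<^sub>\<le>\<^sub>0")
  case True
  have "z \<noteq> 0" using assms by auto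
  with True have "z \<in> \<real>" "Re z < 0"
    by (auto simp: complex_nonpos_Reals_iff complex_eq_iff complex_is_Real_iff)
  then show ?thesis
    using The_derivative_within_Reals lambert_W_has_field_derivative_within_Reals assms
    by (simp add: lambert_W_deriv_def)
next
  case False
  note deriv = lambert_W_has_field_derivative[OF assms False, of k]
  show ?thesis
    using The_derivative_within_Reals[OF _ has_field_derivative_at_within[OF deriv]]
      DERIV_imp_deriv[OF deriv] by (simp add: lambert_W_deriv_def)
qed

lemma plus_Ln_lambert_W:
  assumes "exp 1 < norm z"
  shows "lambert_W k z \<noteq> 0" "plus_Ln (lambert_W k z) = Ln z + 2 * of_real pi * \<i> * of_int k"
  using wright_omega[OF Re_Ln_plus_branch_gt_1[OF assms]]
  by (simp_all add: lambert_W_eq_wright_omega[OF assms])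

lemma lambert_W_0_real:
  assumes "exp 1 < r"
  defines "X \<equiv> Re (lambert_W 0 (of_real r))"
  shows "1 < X" "X + ln X = ln r"
proof -
  have "0 < r" using assms(1) exp_gt_zero[of 1] by linarith
  with assms(1) have norm_r: "exp 1 < norm (of_real r :: complex)" by simp
  define u where "u = lambert_W 0 (of_real r)"
  have u: "u \<noteq> 0" "plus_Ln u = of_real (ln r)"
    using plus_Ln_lambert_W[OF norm_r, of 0] \<open>0 < r\<close> by (simp_all add: u_def Ln_of_real)
  have "1 < ln r" using assms(1) \<open>0 < r\<close> by (metis ln_exp ln_less_cancel_iff exp_gt_zero)
  then have "Arg u = 0" using Arg_eq_0_if_Im_plus_Ln_eq_0 u by simp
  with u have X: "X = norm u" "norm u + ln (norm u) = ln r"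
    using Re_plus_Ln[of u] cos_Arg[of u] by (simp_all add: X_def flip: u_def)
  show "X + ln X = ln r" using X by simp
  show "1 < X"
  proof (rule ccontr)
    assume "\<not> 1 < X"
    then have "ln (norm u) \<le> 0" using X u(1) by simp
    with X \<open>1 < ln r\<close> \<open>\<not> 1 < X\<close> show False by linarith
  qed
qed

lemma lambert_W_0_norm_le_norm_lambert_W:
  assumes "exp 1 < norm z"
  shows "Re (lambert_W 0 (of_real (norm z))) \<le> norm (lambert_W k z)"
proof -
  define X where "X = Re (lambert_W 0 (of_real (norm z)))"
  define w where "w = lambert_W k z"
  note X = lambert_W_0_real[OF assms, folded X_def]
  have "w \<noteq> 0" "z \<noteq> 0" using plus_Ln_lambert_W(1)[OF assms] assms by (auto simp: w_def)
  have "Re (plus_Ln w) = ln (norm z)"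
    using plus_Ln_lambert_W(2)[OF assms, of k] \<open>z \<noteq> 0\<close> by (simp add: w_def)
  with \<open>w \<noteq> 0\<close> have "Re w + ln (norm w) = ln (norm z)" by (simp add: plus_Ln_def)
  then have "X + ln X \<le> norm w + ln (norm w)"
    using X complex_Re_le_cmod[of w] by linarith
  then show ?thesis
    using X(1) \<open>w \<noteq> 0\<close> x_plus_ln_le_cancel[of X "norm w"]
    by (simp add: X_def w_def)
qed

theorem theorem4:
  fixes k :: int and z :: complex
  assumes "norm z > exp 1"
  shows "norm (lambert_W_deriv k z) \<le>
    (1 / norm z) * (Re (lambert_W 0 (of_real (norm z))) /
                    (Re (lambert_W 0 (of_real (norm z))) - 1))"
proof -
  define X where "X = Re (lambert_W 0 (of_real (norm z)))"
  define w where "w = lambert_W k z"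
  have "1 < X" "X \<le> norm w"
    using lambert_W_0_real(1)[OF assms] lambert_W_0_norm_le_norm_lambert_W[OF assms]
    by (simp_all add: X_def w_def)
  have "0 < norm w - 1" "norm w - 1 \<le> norm (w + 1)"
    using \<open>1 < X\<close> \<open>X \<le> norm w\<close> norm_triangle_ineq2[of w "-1"] by simp_all
  have "norm (lambert_W_deriv k z) = norm w / norm (w + 1) * (1 / norm z)"
    by (simp add: lambert_W_deriv_eq[OF assms] norm_mult norm_divide norm_inverse
        divide_inverse flip: w_def)
  also have "\<dots> \<le> norm w / (norm w - 1) * (1 / norm z)"
    using \<open>0 < norm w - 1\<close> \<open>norm w - 1 \<le> norm (w + 1)\<close>
    by (intro mult_right_mono divide_left_mono mult_pos_pos) auto
  also have "\<dots> \<le> X / (X - 1) * (1 / norm z)"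
    using \<open>1 < X\<close> \<open>X \<le> norm w\<close> by (intro mult_right_mono) (simp_all add: field_simps)
  finally show ?thesis by (simp add: X_def mult.commute)
qed

end
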